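(* Let $f(x)=\frac1n\sum_{i=1}^nf_i(x)$ on $\mathbb{R}^d$ where each $f_i$ is lower bounded and $L_i$-smooth, and let $(c_k)_{k\ge0}$ be any non-decreasing positive sequence of real numbers. Under the DecSPS stepsize (defined in the context), for every $k\in\mathbb{N}$, $$\min\left\{\frac1{2c_kL_{\max}},\frac{c_0\gamma_b}{c_k}\right\}\le\gamma_k\le\frac{c_0\gamma_b}{c_k},$$ where $L_{\max}=\max_iL_i$, and moreover $\gamma_k\le\gamma_{k-1}$.
   Context: For $\mathcal S\subseteq[n]$, $f_{\mathcal S}:=\frac1{|\mathcal S|}\sum_{i\in\mathcal S}f_i$, $f^*_{\mathcal S}:=\inf_xf_{\mathcal S}(x)$, and $\ell^*_{\mathcal S}$ is a given real number with $\ell^*_{\mathcal S}\le f^*_{\mathcal S}$. Given any sequence of minibatches $\mathcal S_k\subseteq[n]$ and points $x^k$ (the SGD iterates $x^{k+1}=x^k-\gamma_k\nabla f_{\mathcal S_k}(x^k)$) with $\nabla f_{\mathcal S_k}(x^k)\ne0$, the DecSPS stepsize is $\gamma_k:=\frac1{c_k}\min\left\{\frac{f_{\mathcal S_k}(x^k)-\ell^*_{\mathcal S_k}}{\|\nabla f_{\mathcal S_k}(x^k)\|^2},\ c_{k-1}\gamma_{k-1}\right\}$ for $k\ge0$, with $c_{-1}=c_0$ and $\gamma_{-1}=\gamma_b>0$ a fixed constant. *)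

theory Defs
  imports "HOL-Analysis.Analysis"
begin

definition fS :: "(nat \<Rightarrow> 'a \<Rightarrow> real) \<Rightarrow> nat set \<Rightarrow> 'a \<Rightarrow> real" where
  "fS f S x = (\<Sum>i\<in>S. f i x) / real (card S)"

definition gS :: "(nat \<Rightarrow> 'a \<Rightarrow> 'a::real_vector) \<Rightarrow> nat set \<Rightarrow> 'a \<Rightarrow> 'a" where
  "gS g S x = (1 / real (card S)) *\<^sub>R (\<Sum>i\<in>S. g i x)"

definition fS_star :: "(nat \<Rightarrow> 'a \<Rightarrow> real) \<Rightarrow> nat set \<Rightarrow> real" where
  "fS_star f S = (INF x. fS f S x)"

end

(* Smoothness gives the Polyak ratio (f_S(x) - l_S) / |grad f_S(x)|^2 the lower bound 1/(2 L):
   a gradient step of length 1/L already decreases f_S by |grad f_S(x)|^2/(2 L), and f_S never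
   drops below l_S. Since c_k gamma_k = min(ratio_k, c_(k-1) gamma_(k-1)), the products c_k gamma_k
   are the running minima of the ratios and of c_0 gamma_b; dividing by the non-decreasing c_k
   gives both bounds and the monotonicity of gamma_k. *)

theory Submission
  imports Defs
begin

lemma lipschitz_gradient_quadratic_upper_bound:
  fixes h :: "'a::real_inner \<Rightarrow> real" and G :: "'a \<Rightarrow> 'a"
  assumes deriv: "\<And>y. (h has_derivative (\<lambda>v. G y \<bullet> v)) (at y)"
    and lip: "\<And>y z. norm (G y - G z) \<le> K * norm (y - z)"
  shows "h z \<le> h y + G y \<bullet> (z - y) + K / 2 * (norm (z - y))\<^sup>2"
proof -
  define d where "d = z - y"
  define \<phi> where "\<phi> s = h (y + s *\<^sub>R d) - s * (G y \<bullet> d) - K / 2 * s\<^sup>2 * (norm d)\<^sup>2" for s :: real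
  have \<phi>_deriv: "(\<phi> has_real_derivative
      G (y + s *\<^sub>R d) \<bullet> d - G y \<bullet> d - K * s * (norm d)\<^sup>2) (at s)" for s
  proof -
    have "((\<lambda>s. h (y + s *\<^sub>R d)) has_derivative (\<lambda>t. G (y + s *\<^sub>R d) \<bullet> (t *\<^sub>R d))) (at s)"
      by (rule diff_chain_at[OF _ deriv, unfolded o_def]) (auto intro!: derivative_eq_intros)
    then have "((\<lambda>s. h (y + s *\<^sub>R d)) has_real_derivative G (y + s *\<^sub>R d) \<bullet> d) (at s)"
      by (simp add: has_field_derivative_def mult_commute_abs)
    then show ?thesis
      unfolding \<phi>_def[abs_def] by (auto intro!: derivative_eq_intros simp: power2_eq_square)
  qed
  have \<phi>_deriv_nonpos: "G (y + s *\<^sub>R d) \<bullet> d - G y \<bullet> d - K * s * (norm d)\<^sup>2 \<le> 0" if "0 \<le> s" for s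
  proof -
    have "G (y + s *\<^sub>R d) \<bullet> d - G y \<bullet> d = (G (y + s *\<^sub>R d) - G y) \<bullet> d"
      by (simp add: inner_diff_left)
    also have "\<dots> \<le> norm (G (y + s *\<^sub>R d) - G y) * norm d"
      by (rule norm_cauchy_schwarz)
    also have "\<dots> \<le> K * norm (s *\<^sub>R d) * norm d"
      using lip[of "y + s *\<^sub>R d" y] by (simp add: mult_right_mono)
    also have "\<dots> = K * s * (norm d)\<^sup>2"
      using that by (simp add: power2_eq_square)
    finally show ?thesis by simp
  qed
  have "\<phi> 1 \<le> \<phi> 0"
    using \<phi>_deriv \<phi>_deriv_nonpos by (intro DERIV_nonpos_imp_nonincreasing[of 0 1]) (auto intro!: exI)
  then show ?thesis
    by (simp add: \<phi>_def d_def)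
qed

(* No sign condition on K: for K = 0 both sides are h y, as 1 / 0 = 0. *)
lemma lipschitz_gradient_descent_step:
  fixes h :: "'a::real_inner \<Rightarrow> real" and G :: "'a \<Rightarrow> 'a"
  assumes "\<And>y. (h has_derivative (\<lambda>v. G y \<bullet> v)) (at y)"
    and "\<And>y z. norm (G y - G z) \<le> K * norm (y - z)"
  shows "h (y - (1 / K) *\<^sub>R G y) \<le> h y - (norm (G y))\<^sup>2 / (2 * K)"
proof (cases "K = 0")
  case False
  have "h (y - (1 / K) *\<^sub>R G y)
      \<le> h y + G y \<bullet> (- (1 / K) *\<^sub>R G y) + K / 2 * (norm ((1 / K) *\<^sub>R G y))\<^sup>2"
    using lipschitz_gradient_quadratic_upper_bound[OF assms, of "y - (1 / K) *\<^sub>R G y" y] by simp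
  also have "\<dots> = h y - (norm (G y))\<^sup>2 / (2 * K)"
    using False by (simp add: flip: power2_norm_eq_inner) (simp add: power2_eq_square field_simps)
  finally show ?thesis .
qed simp


lemma fS_has_derivative:
  assumes "\<And>i. i \<in> T \<Longrightarrow> (f i has_derivative (\<lambda>v. grad i y \<bullet> v)) (at y)"
  shows "(fS f T has_derivative (\<lambda>v. gS grad T y \<bullet> v)) (at y)"
proof -
  have "((\<lambda>x. \<Sum>i\<in>T. f i x) has_derivative (\<lambda>v. \<Sum>i\<in>T. grad i y \<bullet> v)) (at y)"
    using assms by (intro has_derivative_sum)
  from has_derivative_mult_left[OF this, of "1 / real (card T)"] show ?thesis
    by (simp add: fS_def[abs_def] gS_def inner_sum_left)
qed

lemma gS_lipschitz:
  assumes "finite T" "T \<noteq> {}"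
    and "\<And>i. i \<in> T \<Longrightarrow> norm (grad i y - grad i z) \<le> K * norm (y - z)"
  shows "norm (gS grad T y - gS grad T z) \<le> K * norm (y - z)"
proof -
  have "norm (gS grad T y - gS grad T z) = norm (\<Sum>i\<in>T. grad i y - grad i z) / real (card T)"
    by (simp add: gS_def sum_subtractf flip: scaleR_diff_right)
  also have "\<dots> \<le> (\<Sum>i\<in>T. K * norm (y - z)) / real (card T)"
    using assms by (intro divide_right_mono order.trans[OF norm_sum sum_mono]) auto
  also have "\<dots> = K * norm (y - z)"
    using assms by simp
  finally show ?thesis .
qed

lemma bdd_below_fS:
  assumes "finite T" "\<And>i. i \<in> T \<Longrightarrow> bdd_below (range (f i))"
  shows "bdd_below (range (fS f T))"
proof -
  obtain b where b: "\<And>i x. i \<in> T \<Longrightarrow> b i \<le> f i x"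
    using assms(2) unfolding bdd_below_def by (metis rangeI)
  have "(\<Sum>i\<in>T. b i) / real (card T) \<le> fS f T x" for x
    unfolding fS_def by (intro divide_right_mono sum_mono b) auto
  then show ?thesis
    by (intro bdd_belowI2)
qed

lemma fS_star_le_fS:
  assumes "bdd_below (range (fS f T))"
  shows "fS_star f T \<le> fS f T y"
  unfolding fS_star_def using assms by (rule cINF_lower) simp

lemma polyak_ratio_nonneg:
  assumes "bdd_below (range (fS f T))" "e \<le> fS_star f T"
  shows "0 \<le> (fS f T y - e) / (norm (gS grad T y))\<^sup>2"
  using fS_star_le_fS[OF assms(1), of y] assms(2) by simp

lemma polyak_ratio_lower_bound:
  fixes f :: "nat \<Rightarrow> 'a::real_inner \<Rightarrow> real"
  assumes "finite T" "T \<noteq> {}"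
    and deriv: "\<And>i y. i \<in> T \<Longrightarrow> (f i has_derivative (\<lambda>v. grad i y \<bullet> v)) (at y)"
    and lip: "\<And>i y z. i \<in> T \<Longrightarrow> norm (grad i y - grad i z) \<le> K * norm (y - z)"
    and bdd: "\<And>i. i \<in> T \<Longrightarrow> bdd_below (range (f i))"
    and "e \<le> fS_star f T" "gS grad T y \<noteq> 0"
  shows "1 / (2 * K) \<le> (fS f T y - e) / (norm (gS grad T y))\<^sup>2"
proof -
  let ?g = "gS grad T y"
  have "fS f T (y - (1 / K) *\<^sub>R ?g) \<le> fS f T y - (norm ?g)\<^sup>2 / (2 * K)"
    by (rule lipschitz_gradient_descent_step[OF fS_has_derivative gS_lipschitz])
      (use assms in auto)
  moreover have "e \<le> fS f T (y - (1 / K) *\<^sub>R ?g)"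
    using assms(6) fS_star_le_fS[OF bdd_below_fS[OF assms(1) bdd]] by (rule order.trans)
  ultimately have "(norm ?g)\<^sup>2 * (1 / (2 * K)) \<le> fS f T y - e"
    by simp
  then show ?thesis
    using assms(7) by (simp add: pos_le_divide_eq mult.commute)
qed

lemma running_min_bounds:
  fixes a r :: "nat \<Rightarrow> real"
  assumes "a 0 = min (r 0) a0" "\<And>k. a (Suc k) = min (r (Suc k)) (a k)" "\<And>k. m \<le> r k"
  shows "min m a0 \<le> a k \<and> a k \<le> a0"
  using assms by (induction k) (auto intro: min.coboundedI1)


lemma decsps_stepsize_bounds:
  fixes c r \<gamma> :: "nat \<Rightarrow> real"
  assumes c_pos: "\<And>k. 0 < c k" and c_mono: "mono c" and \<gamma>b_pos: "0 < \<gamma>b"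
    and r_nonneg: "\<And>k. 0 \<le> r k" and r_lower: "\<And>k. m \<le> r k"
    and \<gamma>0: "\<gamma> 0 = (1 / c 0) * min (r 0) (c 0 * \<gamma>b)"
    and \<gamma>Suc: "\<And>k. \<gamma> (Suc k) = (1 / c (Suc k)) * min (r (Suc k)) (c k * \<gamma> k)"
  shows "min (m / c k) (c 0 * \<gamma>b / c k) \<le> \<gamma> k \<and> \<gamma> k \<le> c 0 * \<gamma>b / c k
       \<and> \<gamma> k \<le> (if k = 0 then \<gamma>b else \<gamma> (k - 1))"
proof -
  define a where "a k = c k * \<gamma> k" for k
  have a_0: "a 0 = min (r 0) (c 0 * \<gamma>b)"
    using \<gamma>0 c_pos[of 0] by (simp add: a_def)
  have a_Suc: "a (Suc k) = min (r (Suc k)) (a k)" for k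
    using \<gamma>Suc[of k] c_pos[of "Suc k"] by (simp add: a_def)
  have a_nonneg: "0 \<le> a j" for j
    using running_min_bounds[OF a_0 a_Suc r_nonneg, of j] c_pos[of 0] \<gamma>b_pos by simp
  have \<gamma>_eq: "\<gamma> j = a j / c j" for j
    using c_pos[of j] by (simp add: a_def)
  have "\<gamma> k \<le> (if k = 0 then \<gamma>b else \<gamma> (k - 1))"
  proof (cases k)
    case 0
    then show ?thesis
      using a_0 c_pos[of 0] \<gamma>_eq by (simp add: pos_divide_le_eq mult.commute)
  next
    case (Suc j)
    have "a (Suc j) / c (Suc j) \<le> a j / c (Suc j)"
      using a_Suc[of j] c_pos[of "Suc j"] by (simp add: divide_right_mono)
    also have "\<dots> \<le> a j / c j"
      using a_nonneg[of j] c_pos[of j] monoD[OF c_mono, of j "Suc j"]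
      by (intro divide_left_mono) auto
    finally show ?thesis
      using Suc \<gamma>_eq by simp
  qed
  moreover have "min (m / c k) (c 0 * \<gamma>b / c k) = min m (c 0 * \<gamma>b) / c k"
    using c_pos[of k] by (simp add: min_divide_distrib_right)
  ultimately show ?thesis
    using running_min_bounds[OF a_0 a_Suc r_lower, of k] c_pos[of k] \<gamma>_eq[of k]
    by (simp add: divide_right_mono)
qed

theorem lemma1:
  fixes n :: nat
    and f :: "nat \<Rightarrow> 'a::euclidean_space \<Rightarrow> real"
    and grad :: "nat \<Rightarrow> 'a \<Rightarrow> 'a"
    and L :: "nat \<Rightarrow> real"
    and c :: "nat \<Rightarrow> real"
    and S :: "nat \<Rightarrow> nat set"
    and x :: "nat \<Rightarrow> 'a"
    and \<gamma> :: "nat \<Rightarrow> real"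
    and \<gamma>b :: real
    and ell :: "nat set \<Rightarrow> real"
  assumes n_pos: "n \<ge> 1"
    and grad: "\<And>i y. i < n \<Longrightarrow> (f i has_derivative (\<lambda>h. grad i y \<bullet> h)) (at y)"
    and smooth: "\<And>i y z. i < n \<Longrightarrow> norm (grad i y - grad i z) \<le> L i * norm (y - z)"
    and lower_bdd: "\<And>i. i < n \<Longrightarrow> bdd_below (range (f i))"
    and c_pos: "\<And>k. c k > 0"
    and c_mono: "mono c"
    and S_sub: "\<And>k. S k \<subseteq> {..<n}"
    and S_ne: "\<And>k. S k \<noteq> {}"
    and ell_le: "\<And>T. T \<subseteq> {..<n} \<Longrightarrow> T \<noteq> {} \<Longrightarrow> ell T \<le> fS_star f T"
    and grad_nz: "\<And>k. gS grad (S k) (x k) \<noteq> 0"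
    and sgd: "\<And>k. x (Suc k) = x k - \<gamma> k *\<^sub>R gS grad (S k) (x k)"
    and \<gamma>b_pos: "\<gamma>b > 0"
    and \<gamma>0: "\<gamma> 0 = (1 / c 0) * min ((fS f (S 0) (x 0) - ell (S 0)) / (norm (gS grad (S 0) (x 0)))\<^sup>2) (c 0 * \<gamma>b)"
    and \<gamma>Suc: "\<And>k. \<gamma> (Suc k) = (1 / c (Suc k)) *
        min ((fS f (S (Suc k)) (x (Suc k)) - ell (S (Suc k))) / (norm (gS grad (S (Suc k)) (x (Suc k))))\<^sup>2)
            (c k * \<gamma> k)"
  shows "min (1 / (2 * c k * Max (L ` {..<n}))) (c 0 * \<gamma>b / c k) \<le> \<gamma> k
       \<and> \<gamma> k \<le> c 0 * \<gamma>b / c k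
       \<and> \<gamma> k \<le> (if k = 0 then \<gamma>b else \<gamma> (k - 1))"
proof -
  define Lmax where "Lmax = Max (L ` {..<n})"
  have batch_finite: "finite (S k)" for k
    using S_sub finite_subset by blast
  have batch_index: "i < n" if "i \<in> S k" for i k
    using S_sub that by blast
  have smooth_Lmax: "norm (grad i y - grad i z) \<le> Lmax * norm (y - z)" if "i < n" for i y z
  proof -
    have "L i \<le> Lmax"
      unfolding Lmax_def using that by (intro Max_ge) auto
    then show ?thesis
      using smooth[OF that, of y z] by (meson mult_right_mono norm_ge_zero order.trans)
  qed
  have "min (1 / (2 * Lmax) / c k) (c 0 * \<gamma>b / c k) \<le> \<gamma> k \<and> \<gamma> k \<le> c 0 * \<gamma>b / c k
      \<and> \<gamma> k \<le> (if k = 0 then \<gamma>b else \<gamma> (k - 1))"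
  proof (rule decsps_stepsize_bounds[OF c_pos c_mono \<gamma>b_pos _ _ \<gamma>0 \<gamma>Suc])
    show "0 \<le> (fS f (S k) (x k) - ell (S k)) / (norm (gS grad (S k) (x k)))\<^sup>2" for k
      by (rule polyak_ratio_nonneg[OF bdd_below_fS[OF batch_finite]])
        (use lower_bdd batch_index ell_le S_sub S_ne in auto)
    show "1 / (2 * Lmax) \<le> (fS f (S k) (x k) - ell (S k)) / (norm (gS grad (S k) (x k)))\<^sup>2" for k
      by (rule polyak_ratio_lower_bound[OF batch_finite S_ne])
        (use grad smooth_Lmax lower_bdd batch_index ell_le S_sub S_ne grad_nz in auto)
  qed
  then show ?thesis
    by (simp add: Lmax_def mult.commute mult.left_commute)
qed

end
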